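(* Let $c>0$ and let $w$ be a solution on the interval $[\lambda_0,\lambda_1]$ of the ODE \[ w''(\lambda)-D(\lambda)\,w'(\lambda)+c^2 w(\lambda)=f(\lambda). \] Suppose that $\sup_{\lambda\in[\lambda_0,\lambda_1]}|D(\lambda)|\leqslant c$, and that there exists a function $S:[\lambda_0,\lambda_1]\to\mathbb{R}$ with $S(\eta)+D(\eta)\leqslant 0$ for all $\eta\in[\lambda_0,\lambda_1]$ and $\int_{\lambda_0}^{\lambda}|S(\eta)|\,d\eta\leqslant C_S$, where $C_S$ is a constant. Then for $\lambda\in[\lambda_0,\lambda_1]$, \[ |w(\lambda)|+|w'(\lambda)|\leqslant C\Big(|w(\lambda_0)|+|w'(\lambda_0)|+\int_{\lambda_0}^{\lambda}|f(\tau)|\,d\tau\Big), \] where $C$ is a constant depending only on $c$ and $C_S$. *)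

theory Defs
  imports "HOL-Analysis.Analysis"
begin

end

theory Submission imports Defs begin

(* The energy E = sqrt (w'^2 + c^2 w^2) obeys E' \<le> max D 0 * E + |f|, since
   E E' = w' (w'' + c^2 w) = w' (f + D w') and |w'| \<le> E.  Gronwall's inequality then gives
   E(l) \<le> exp (\<integral> max D 0) (E(l0) + \<integral> |f|), and max D 0 \<le> |S| because S + D \<le> 0,
   so the exponential is at most exp C_S.  Since E is not differentiable where it vanishes,
   the argument is run for sqrt (E^2 + eps) and eps tends to 0.  Finally E is comparable to
   |w| + |w'| with constants depending only on c. *)

lemma increment_le_integral_of_deriv_le:
  fixes H H' g :: "real \<Rightarrow> real"
  assumes "a \<le> b"
    and deriv: "\<And>x. x \<in> {a..b} \<Longrightarrow> (H has_real_derivative H' x) (at x within {a..b})"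
    and le: "\<And>x. x \<in> {a..b} \<Longrightarrow> H' x \<le> g x"
    and "g integrable_on {a..b}"
  shows "H b - H a \<le> integral {a..b} g"
proof -
  have "(H' has_integral (H b - H a)) {a..b}"
    using \<open>a \<le> b\<close> deriv
    by (intro fundamental_theorem_of_calculus) (auto simp flip: has_real_derivative_iff_has_vector_derivative)
  then show ?thesis
    using le \<open>g integrable_on {a..b}\<close> by (intro has_integral_le[OF _ integrable_integral])
qed

lemma gronwall_linear:
  fixes F F' p g :: "real \<Rightarrow> real"
  assumes deriv: "\<And>x. x \<in> {a..b} \<Longrightarrow> (F has_real_derivative F' x) (at x within {a..b})"
    and p: "continuous_on {a..b} p" "\<And>x. x \<in> {a..b} \<Longrightarrow> 0 \<le> p x"
    and g: "g integrable_on {a..b}" "\<And>x. x \<in> {a..b} \<Longrightarrow> 0 \<le> g x"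
    and growth: "\<And>x. x \<in> {a..b} \<Longrightarrow> F' x \<le> p x * F x + g x"
    and t: "t \<in> {a..b}"
  shows "F t \<le> exp (integral {a..t} p) * (F a + integral {a..t} g)"
proof -
  define P where "P x = integral {a..x} p" for x
  define H where "H x = exp (- P x) * F x" for x
  have sub: "{a..t} \<subseteq> {a..b}"
    using t by auto
  have P_nonneg: "0 \<le> P x" if "x \<in> {a..b}" for x
    unfolding P_def using that p
    by (intro integral_nonneg integrable_continuous_real) (auto intro: continuous_on_subset)
  have "(H has_real_derivative exp (- P x) * (F' x - p x * F x)) (at x within {a..t})"
    if "x \<in> {a..t}" for x
  proof (rule DERIV_subset[OF _ sub])
    have x: "x \<in> {a..b}"
      using that sub by blast
    show "(H has_real_derivative exp (- P x) * (F' x - p x * F x)) (at x within {a..b})"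
      using integral_has_real_derivative[OF p(1) x] deriv[OF x] unfolding H_def P_def
      by (auto intro!: derivative_eq_intros simp: algebra_simps)
  qed
  moreover have "exp (- P x) * (F' x - p x * F x) \<le> g x" if "x \<in> {a..b}" for x
  proof -
    have "exp (- P x) * (F' x - p x * F x) \<le> exp (- P x) * g x"
      using growth[OF that] by (intro mult_left_mono) auto
    also have "\<dots> \<le> g x"
      using P_nonneg[OF that] g(2)[OF that] by (intro mult_left_le_one_le) auto
    finally show ?thesis .
  qed
  moreover have "g integrable_on {a..t}"
    using g(1) sub by (rule integrable_on_subinterval)
  ultimately have "H t - H a \<le> integral {a..t} g"
    using t sub by (intro increment_le_integral_of_deriv_le) auto
  moreover have "H a = F a"
    by (simp add: H_def P_def)
  moreover have "F t = exp (P t) * H t"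
    by (simp add: H_def exp_minus)
  ultimately show ?thesis
    by (simp add: P_def mult_left_mono)
qed

lemma has_real_derivative_sqrt_energy:
  fixes u v :: "real \<Rightarrow> real"
  assumes "0 < eps"
    and "(u has_real_derivative u') (at x within T)" "(v has_real_derivative v') (at x within T)"
  shows "((\<lambda>x. sqrt (u x ^ 2 + c\<^sup>2 * v x ^ 2 + eps)) has_real_derivative
           (u x * u' + c\<^sup>2 * v x * v') / sqrt (u x ^ 2 + c\<^sup>2 * v x ^ 2 + eps)) (at x within T)"
proof -
  have "0 < u x ^ 2 + c\<^sup>2 * v x ^ 2 + eps"
    using \<open>0 < eps\<close> by (intro add_nonneg_pos) auto
  then show ?thesis
    using assms(2,3) by (auto intro!: derivative_eq_intros simp: field_simps)
qed

lemma damped_energy_rate_le: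
  fixes a d f E :: real
  assumes "a\<^sup>2 \<le> E\<^sup>2" "0 < E"
  shows "a * (f + d * a) / E \<le> max d 0 * E + \<bar>f\<bar>"
proof -
  have "\<bar>a\<bar> \<le> E"
    using assms by (auto intro: power2_le_imp_le)
  then have "a * f \<le> E * \<bar>f\<bar>"
    using abs_ge_self[of "a * f"] by (simp add: abs_mult order.trans[OF _ mult_right_mono])
  moreover have "d * a\<^sup>2 \<le> max d 0 * E\<^sup>2"
  proof -
    have "d * a\<^sup>2 \<le> max d 0 * a\<^sup>2"
      by (intro mult_right_mono) auto
    also have "\<dots> \<le> max d 0 * E\<^sup>2"
      using assms(1) by (intro mult_left_mono) auto
    finally show ?thesis .
  qed
  ultimately have "a * (f + d * a) \<le> E * (max d 0 * E + \<bar>f\<bar>)"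
    by (simp add: algebra_simps power2_eq_square)
  then show ?thesis
    using \<open>0 < E\<close> by (simp add: divide_le_eq mult.commute)
qed

lemma regularized_energy_estimate:
  fixes w w' w'' D f :: "real \<Rightarrow> real"
  assumes "0 < eps"
    and dw: "\<And>x. x \<in> {a..b} \<Longrightarrow> (w has_real_derivative w' x) (at x within {a..b})"
    and dw': "\<And>x. x \<in> {a..b} \<Longrightarrow> (w' has_real_derivative w'' x) (at x within {a..b})"
    and ode: "\<And>x. x \<in> {a..b} \<Longrightarrow> w'' x - D x * w' x + c\<^sup>2 * w x = f x"
    and D: "continuous_on {a..b} D"
    and f: "(\<lambda>x. \<bar>f x\<bar>) integrable_on {a..b}"
    and t: "t \<in> {a..b}"
  shows "sqrt (w' t ^ 2 + c\<^sup>2 * w t ^ 2 + eps)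
    \<le> exp (integral {a..t} (\<lambda>x. max (D x) 0))
        * (sqrt (w' a ^ 2 + c\<^sup>2 * w a ^ 2 + eps) + integral {a..t} (\<lambda>x. \<bar>f x\<bar>))"
proof -
  define E where "E x = sqrt (w' x ^ 2 + c\<^sup>2 * w x ^ 2 + eps)" for x
  have E_pos: "0 < E x" for x
    unfolding E_def using \<open>0 < eps\<close> by (intro real_sqrt_gt_zero add_nonneg_pos) auto
  have w'_le_E: "w' x ^ 2 \<le> (E x)\<^sup>2" for x
    unfolding E_def using \<open>0 < eps\<close> by simp
  have "E t \<le> exp (integral {a..t} (\<lambda>x. max (D x) 0)) * (E a + integral {a..t} (\<lambda>x. \<bar>f x\<bar>))"
  proof (rule gronwall_linear[OF _ _ _ f _ _ t])
    fix x assume x: "x \<in> {a..b}"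
    show "(E has_real_derivative (w' x * w'' x + c\<^sup>2 * w x * w' x) / E x) (at x within {a..b})"
      unfolding E_def by (rule has_real_derivative_sqrt_energy[OF \<open>0 < eps\<close> dw'[OF x] dw[OF x]])
    have "(w' x * w'' x + c\<^sup>2 * w x * w' x) / E x = w' x * (f x + D x * w' x) / E x"
      by (simp add: ode[OF x, symmetric] algebra_simps)
    also have "\<dots> \<le> max (D x) 0 * E x + \<bar>f x\<bar>"
      by (rule damped_energy_rate_le[OF w'_le_E E_pos])
    finally show "(w' x * w'' x + c\<^sup>2 * w x * w' x) / E x \<le> max (D x) 0 * E x + \<bar>f x\<bar>" .
  qed (use D in \<open>auto intro!: continuous_intros\<close>)
  then show ?thesis
    unfolding E_def .
qed

lemma energy_estimate:
  fixes w w' w'' D f :: "real \<Rightarrow> real"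
  assumes dw: "\<And>x. x \<in> {a..b} \<Longrightarrow> (w has_real_derivative w' x) (at x within {a..b})"
    and dw': "\<And>x. x \<in> {a..b} \<Longrightarrow> (w' has_real_derivative w'' x) (at x within {a..b})"
    and ode: "\<And>x. x \<in> {a..b} \<Longrightarrow> w'' x - D x * w' x + c\<^sup>2 * w x = f x"
    and D: "continuous_on {a..b} D"
    and f: "(\<lambda>x. \<bar>f x\<bar>) integrable_on {a..b}"
    and t: "t \<in> {a..b}"
  shows "sqrt (w' t ^ 2 + c\<^sup>2 * w t ^ 2)
    \<le> exp (integral {a..t} (\<lambda>x. max (D x) 0))
        * (sqrt (w' a ^ 2 + c\<^sup>2 * w a ^ 2) + integral {a..t} (\<lambda>x. \<bar>f x\<bar>))"
  (is "sqrt ?Et \<le> ?K * (sqrt ?Ea + ?I)")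
proof (rule tendsto_le[OF trivial_limit_at_right_real])
  show "((\<lambda>eps. ?K * (sqrt (?Ea + eps) + ?I)) \<longlongrightarrow> ?K * (sqrt ?Ea + ?I)) (at_right 0)"
    by (auto intro!: tendsto_eq_intros)
  show "((\<lambda>eps. sqrt (?Et + eps)) \<longlongrightarrow> sqrt ?Et) (at_right 0)"
    by (auto intro!: tendsto_eq_intros)
  show "\<forall>\<^sub>F eps in at_right 0. sqrt (?Et + eps) \<le> ?K * (sqrt (?Ea + eps) + ?I)"
    using eventually_at_right_less
    by eventually_elim (rule regularized_energy_estimate[OF _ dw dw' ode D f t])
qed

lemma integral_max_zero_le_integral_abs:
  fixes D S :: "real \<Rightarrow> real"
  assumes D: "continuous_on {a..b} D"
    and S: "(\<lambda>x. \<bar>S x\<bar>) integrable_on {a..b}"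
    and SD: "\<And>x. x \<in> {a..b} \<Longrightarrow> S x + D x \<le> 0"
  shows "integral {a..b} (\<lambda>x. max (D x) 0) \<le> integral {a..b} (\<lambda>x. \<bar>S x\<bar>)"
proof (rule integral_le[OF _ S])
  show "(\<lambda>x. max (D x) 0) integrable_on {a..b}"
    using D by (intro integrable_continuous_real continuous_intros)
  show "max (D x) 0 \<le> \<bar>S x\<bar>" if "x \<in> {a..b}" for x
    using SD[OF that] by auto
qed

lemma abs_add_abs_le_energy:
  fixes u v c :: real
  assumes "0 < c"
  shows "\<bar>v\<bar> + \<bar>u\<bar> \<le> (1 + 1 / c) * sqrt (u\<^sup>2 + c\<^sup>2 * v\<^sup>2)"
proof -
  have u: "\<bar>u\<bar> \<le> sqrt (u\<^sup>2 + c\<^sup>2 * v\<^sup>2)"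
    by (rule real_le_rsqrt) simp
  have "c * \<bar>v\<bar> \<le> sqrt (u\<^sup>2 + c\<^sup>2 * v\<^sup>2)"
    by (rule real_le_rsqrt) (simp add: power_mult_distrib)
  then have "\<bar>v\<bar> \<le> sqrt (u\<^sup>2 + c\<^sup>2 * v\<^sup>2) / c"
    using \<open>0 < c\<close> by (simp add: field_simps)
  with u show ?thesis
    by (simp add: algebra_simps)
qed

lemma energy_le_abs_add_abs:
  fixes u v c :: real
  assumes "0 \<le> c"
  shows "sqrt (u\<^sup>2 + c\<^sup>2 * v\<^sup>2) \<le> max 1 c * (\<bar>v\<bar> + \<bar>u\<bar>)"
proof -
  have "u\<^sup>2 + c\<^sup>2 * v\<^sup>2 \<le> (\<bar>u\<bar> + c * \<bar>v\<bar>)\<^sup>2"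
    using \<open>0 \<le> c\<close> by (simp add: power2_sum power_mult_distrib)
  then have "sqrt (u\<^sup>2 + c\<^sup>2 * v\<^sup>2) \<le> \<bar>u\<bar> + c * \<bar>v\<bar>"
    using \<open>0 \<le> c\<close> by (intro real_le_lsqrt) auto
  also have "\<dots> \<le> max 1 c * \<bar>u\<bar> + max 1 c * \<bar>v\<bar>"
    using mult_right_mono[of 1 "max 1 c" "\<bar>u\<bar>"] mult_right_mono[of c "max 1 c" "\<bar>v\<bar>"] by simp
  finally show ?thesis
    by (simp add: algebra_simps)
qed

lemma damped_oscillator_bound:
  fixes w w' w'' D f S :: "real \<Rightarrow> real"
  assumes "0 < c"
    and dw: "\<And>x. x \<in> {l0..l1} \<Longrightarrow> (w has_real_derivative w' x) (at x within {l0..l1})"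
    and dw': "\<And>x. x \<in> {l0..l1} \<Longrightarrow> (w' has_real_derivative w'' x) (at x within {l0..l1})"
    and D: "continuous_on {l0..l1} D" and f: "continuous_on {l0..l1} f"
    and ode: "\<And>x. x \<in> {l0..l1} \<Longrightarrow> w'' x - D x * w' x + c\<^sup>2 * w x = f x"
    and SD: "\<And>x. x \<in> {l0..l1} \<Longrightarrow> S x + D x \<le> 0"
    and S: "(\<lambda>x. \<bar>S x\<bar>) integrable_on {l0..l1}"
    and C_S: "\<And>l. l \<in> {l0..l1} \<Longrightarrow> integral {l0..l} (\<lambda>x. \<bar>S x\<bar>) \<le> C_S"
    and l: "l \<in> {l0..l1}"
  shows "\<bar>w l\<bar> + \<bar>w' l\<bar>
    \<le> (1 + 1 / c) * exp C_S * max 1 c * (\<bar>w l0\<bar> + \<bar>w' l0\<bar> + integral {l0..l} (\<lambda>t. \<bar>f t\<bar>))"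
proof -
  define E where "E x = sqrt (w' x ^ 2 + c\<^sup>2 * w x ^ 2)" for x
  define I where "I = integral {l0..l} (\<lambda>t. \<bar>f t\<bar>)"
  have sub: "{l0..l} \<subseteq> {l0..l1}"
    using l by auto
  have abs_f: "(\<lambda>t. \<bar>f t\<bar>) integrable_on {l0..l1}"
    using f by (intro integrable_continuous_real continuous_intros)
  have I_nonneg: "0 \<le> I"
    unfolding I_def using integrable_on_subinterval[OF abs_f sub] by (rule integral_nonneg) auto
  have "integral {l0..l} (\<lambda>x. max (D x) 0) \<le> integral {l0..l} (\<lambda>x. \<bar>S x\<bar>)"
    using sub by (intro integral_max_zero_le_integral_abs continuous_on_subset[OF D]
        integrable_on_subinterval[OF S] SD) auto
  also have "\<dots> \<le> C_S"
    by (rule C_S[OF l])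
  finally have damping: "integral {l0..l} (\<lambda>x. max (D x) 0) \<le> C_S" .
  have E_l0: "E l0 + I \<le> max 1 c * (\<bar>w l0\<bar> + \<bar>w' l0\<bar> + I)"
    using energy_le_abs_add_abs[of c "w' l0" "w l0"] mult_right_mono[of 1 "max 1 c" I] I_nonneg \<open>0 < c\<close>
    unfolding E_def by (simp add: distrib_left)
  have "\<bar>w l\<bar> + \<bar>w' l\<bar> \<le> (1 + 1 / c) * E l"
    unfolding E_def by (rule abs_add_abs_le_energy[OF \<open>0 < c\<close>])
  also have "\<dots> \<le> (1 + 1 / c) * (exp C_S * (E l0 + I))"
  proof (rule mult_left_mono)
    have "E l \<le> exp (integral {l0..l} (\<lambda>x. max (D x) 0)) * (E l0 + I)"
      unfolding E_def I_def by (rule energy_estimate[OF dw dw' ode D abs_f l])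
    also have "\<dots> \<le> exp C_S * (E l0 + I)"
      using damping I_nonneg by (intro mult_right_mono) (auto simp: E_def)
    finally show "E l \<le> exp C_S * (E l0 + I)" .
  qed (use \<open>0 < c\<close> in simp)
  also have "\<dots> \<le> (1 + 1 / c) * (exp C_S * (max 1 c * (\<bar>w l0\<bar> + \<bar>w' l0\<bar> + I)))"
    using E_l0 \<open>0 < c\<close> by (intro mult_left_mono) auto
  finally show ?thesis
    by (simp add: I_def mult.assoc)
qed

theorem lemma3p3:
  fixes c C_S :: real
  assumes "c > 0"
  shows "\<exists>C::real. \<forall>(w::real \<Rightarrow> real) w' w'' (D::real \<Rightarrow> real) (f::real \<Rightarrow> real)
            (S::real \<Rightarrow> real) (l0::real) (l1::real).
     (\<forall>x\<in>{l0..l1}. (w has_real_derivative w' x) (at x within {l0..l1})) \<and>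
     (\<forall>x\<in>{l0..l1}. (w' has_real_derivative w'' x) (at x within {l0..l1})) \<and>
     continuous_on {l0..l1} D \<and> continuous_on {l0..l1} f \<and>
     (\<forall>x\<in>{l0..l1}. w'' x - D x * w' x + c\<^sup>2 * w x = f x) \<and>
     (\<forall>x\<in>{l0..l1}. \<bar>D x\<bar> \<le> c) \<and>
     (\<forall>x\<in>{l0..l1}. S x + D x \<le> 0) \<and>
     (\<lambda>x. \<bar>S x\<bar>) integrable_on {l0..l1} \<and>
     (\<forall>l\<in>{l0..l1}. integral {l0..l} (\<lambda>x. \<bar>S x\<bar>) \<le> C_S)
     \<longrightarrow> (\<forall>l\<in>{l0..l1}. \<bar>w l\<bar> + \<bar>w' l\<bar>
            \<le> C * (\<bar>w l0\<bar> + \<bar>w' l0\<bar> + integral {l0..l} (\<lambda>t. \<bar>f t\<bar>)))"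
  by (intro exI[of _ "(1 + 1 / c) * exp C_S * max 1 c"] allI impI ballI, elim conjE,
      rule damped_oscillator_bound[OF assms]) auto

end
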